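(* Let $c>0$ and let $H,H_1,H_2,\ldots$ be i.i.d. positive random variables with $\mathbb P(H>x)=1/(1+cx)$ for $x\ge0$; set $H_0=+\infty$ and let $(\mathcal P_i)_{i\ge0}$ be independent Poisson point processes on $(0,\infty)$ with intensity $\theta>0$, independent of $(H_i)$. Let $S_n$ be the number of polymorphic sites in the sample $\{0,\ldots,n-1\}$. Then $S_n/(n\ln n)\to\theta/c$ in probability as $n\to\infty$.
   Context: Coalescent point process with mutations: the population is $\{0,1,2,\ldots\}$, the coalescence time between individuals $i<i+k$ is $\max\{H_{i+1},\ldots,H_{i+k}\}$. Denote the atoms of $\mathcal P_i$ by $\ell_{i1}<\ell_{i2}<\cdots$ (mutations). Individual $i+k$ ($k\ge0$) carries mutation $\ell_{ij}$ iff $\max\{H_{i+1},\ldots,H_{i+k}\}<\ell_{ij}<H_i$, with $\max\emptyset=0$. $S_n$ is the number of mutations carried by at least one and at most $n-1$ individuals of $\{0,\ldots,n-1\}$; explicitly $S_n=\mathrm{Card}\{(i,j):1\le i\le n-1,\,j\ge1,\,\ell_{ij}<H_i\}+\mathrm{Card}\{j\ge1:\ell_{0j}<\max\{H_1,\ldots,H_{n-1}\}\}$. *)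

theory Defs
  imports "HOL-Probability.Probability"
begin

text \<open>Atoms of the Poisson point process P_i on (0,infinity) with intensity theta,
  represented through i.i.d. Exp(theta) inter-arrival times E i 1, E i 2, ...:
  the j-th atom (j >= 1) is l_{ij} = E i 1 + ... + E i j.\<close>
definition atom :: "(nat \<Rightarrow> nat \<Rightarrow> 'a \<Rightarrow> real) \<Rightarrow> nat \<Rightarrow> nat \<Rightarrow> 'a \<Rightarrow> real" where
  "atom E i j \<omega> = (\<Sum>k\<in>{1..j}. E i k \<omega>)"

definition maxH :: "(nat \<Rightarrow> 'a \<Rightarrow> real) \<Rightarrow> nat \<Rightarrow> 'a \<Rightarrow> real" where
  "maxH H n \<omega> = (if n \<le> 1 then 0 else Max ((\<lambda>k. H k \<omega>) ` {1..<n}))"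

definition S :: "(nat \<Rightarrow> 'a \<Rightarrow> real) \<Rightarrow> (nat \<Rightarrow> nat \<Rightarrow> 'a \<Rightarrow> real) \<Rightarrow> nat \<Rightarrow> 'a \<Rightarrow> nat" where
  "S H E n \<omega> =
     card {(i, j). 1 \<le> i \<and> i \<le> n - 1 \<and> 1 \<le> j \<and> atom E i j \<omega> < H i \<omega>}
   + card {j. 1 \<le> j \<and> atom E 0 j \<omega> < maxH H n \<omega>}"

definition driving :: "(nat \<Rightarrow> 'a \<Rightarrow> real) \<Rightarrow> (nat \<Rightarrow> nat \<Rightarrow> 'a \<Rightarrow> real) \<Rightarrow> nat + nat \<times> nat \<Rightarrow> 'a \<Rightarrow> real" where
  "driving H E k = (case k of Inl i \<Rightarrow> H i | Inr (i, j) \<Rightarrow> E i j)"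

definition driving_index :: "(nat + nat \<times> nat) set" where
  "driving_index = Inl ` {i. 1 \<le> i} \<union> Inr ` {(i, j). 1 \<le> j}"

end

theory Submission
  imports Defs "HOL-Real_Asymp.Real_Asymp"
begin

text \<open>Fix \<open>s > 0\<close>, truncate at height \<open>t = n s\<close> and keep only the first \<open>K \<approx> 2 \<theta> t\<close> atoms
  of each process. With probability \<open>1 - O(1/s)\<close> all \<open>H\<^sub>i\<close> (\<open>1 \<le> i < n\<close>) are at most \<open>t\<close> and
  none of \<open>\<P>\<^sub>0, \<dots>, \<P>\<^sub>n\<^sub>-\<^sub>1\<close> has \<open>K + 1\<close> atoms below \<open>t\<close>; on that event \<open>S\<^sub>n\<close> differs by
  at most \<open>K\<close> from \<open>Z = \<Sum>\<^sub>i Y\<^sub>i\<close>, where \<open>Y\<^sub>i\<close> is the number of the first \<open>K\<close> atoms of \<open>\<P>\<^sub>i\<close>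
  below \<open>H\<^sub>i\<close> if \<open>H\<^sub>i \<le> t\<close>, and \<open>0\<close> otherwise. The \<open>Y\<^sub>i\<close> are independent with values in
  \<open>[0, K]\<close> and \<open>E Y\<^sub>i \<approx> \<theta> E[H; H \<le> t] = \<theta> (ln (1 + c t) / c - t / (1 + c t)) \<sim> \<theta> ln n / c\<close>,
  so \<open>E Z \<sim> (\<theta> / c) n ln n\<close> while \<open>Var Z \<le> K E Z = O(n\<^sup>2 ln n)\<close>. Chebyshev's inequality
  and \<open>s \<rightarrow> \<infinity>\<close> finish the proof.\<close>

section \<open>The Erlang distribution\<close>

lemma erlang_CDF_le_1: "0 < l \<Longrightarrow> erlang_CDF k l x \<le> 1"
  unfolding erlang_CDF_def by (auto intro!: sum_nonneg)

lemma erlang_CDF_mono: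
  assumes l: "0 < l" and "x \<le> y"
  shows "erlang_CDF k l x \<le> erlang_CDF k l y"
proof -
  have "ennreal (erlang_CDF k l x) \<le> ennreal (erlang_CDF k l y)"
    unfolding emeasure_erlang_density[OF l, symmetric] by (rule emeasure_mono) (use assms in auto)
  then show ?thesis
    using erlang_CDF_nonneg[OF l] by (simp add: ennreal_le_iff)
qed

text \<open>\<open>l P(N < K)\<close> for \<open>N\<close> Poisson of mean \<open>l x\<close>: the intensity of the first \<open>K\<close> atoms of a
  Poisson process of rate \<open>l\<close> at \<open>x\<close>.\<close>
lemma sum_erlang_density:
  assumes "0 \<le> x" "1 \<le> K"
  shows "(\<Sum>k<K. erlang_density k l x) = l * (1 - erlang_CDF (K - 1) l x)"
proof -
  have "{..K-1} = {..<K}" using assms by auto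
  then have "l * (1 - erlang_CDF (K - 1) l x) = l * (\<Sum>n<K. (l * x)^n * exp (- l * x) / fact n)"
    using assms by (simp add: erlang_CDF_def)
  also have "\<dots> = (\<Sum>k<K. erlang_density k l x)"
    unfolding sum_distrib_left using assms
    by (intro sum.cong) (auto simp: erlang_density_def power_mult_distrib)
  finally show ?thesis by simp
qed

lemma sum_erlang_CDF_eq_nn_integral:
  assumes l: "0 < l"
  shows "ennreal (\<Sum>k<K. erlang_CDF k l y) =
    (\<integral>\<^sup>+ x. ennreal (\<Sum>k<K. erlang_density k l x) * indicator {..y} x \<partial>lborel)"
proof -
  have "ennreal (\<Sum>k<K. erlang_CDF k l y) = (\<Sum>k<K. ennreal (erlang_CDF k l y))"
    using l by (intro sum_ennreal[symmetric]) auto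
  also have "\<dots> = (\<Sum>k<K. \<integral>\<^sup>+ x. ennreal (erlang_density k l x) * indicator {..y} x \<partial>lborel)"
    using nn_integral_erlang_density[OF l] by simp
  also have "\<dots> = (\<integral>\<^sup>+ x. (\<Sum>k<K. ennreal (erlang_density k l x) * indicator {..y} x) \<partial>lborel)"
    by (rule nn_integral_sum[symmetric]) auto
  also have "\<dots> = (\<integral>\<^sup>+ x. ennreal (\<Sum>k<K. erlang_density k l x) * indicator {..y} x \<partial>lborel)"
    using l by (intro nn_integral_cong) (simp add: sum_distrib_right[symmetric])
  finally show ?thesis .
qed

lemma sum_erlang_CDF_le:
  assumes l: "0 < l"
  shows "ennreal (\<Sum>k<K. erlang_CDF k l y) \<le> ennreal (l * y)"
proof (cases "K = 0 \<or> y < 0")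
  case True
  then show ?thesis by (auto simp: erlang_CDF_def)
next
  case False
  then have K: "1 \<le> K" and y: "0 \<le> y" by auto
  have "ennreal (\<Sum>k<K. erlang_CDF k l y) =
      (\<integral>\<^sup>+ x. ennreal (\<Sum>k<K. erlang_density k l x) * indicator {..y} x \<partial>lborel)"
    by (rule sum_erlang_CDF_eq_nn_integral[OF l])
  also have "\<dots> \<le> (\<integral>\<^sup>+ x. ennreal l * indicator {0..y} x \<partial>lborel)"
  proof (intro nn_integral_mono)
    fix x :: real
    show "ennreal (\<Sum>k<K. erlang_density k l x) * indicator {..y} x \<le> ennreal l * indicator {0..y} x"
    proof (cases "x < 0")
      case True then show ?thesis by (simp add: erlang_density_def)
    next
      case False
      then have "(\<Sum>k<K. erlang_density k l x) = l * (1 - erlang_CDF (K - 1) l x)"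
        using K by (intro sum_erlang_density) auto
      also have "\<dots> \<le> l"
        using l erlang_CDF_nonneg[OF l, of "K - 1" x] by (simp add: mult_le_cancel_left1)
      finally show ?thesis using False by (auto split: split_indicator intro: ennreal_leI)
    qed
  qed
  also have "\<dots> = ennreal (l * y)"
    using y l by (simp add: nn_integral_cmult_indicator ennreal_mult)
  finally show ?thesis .
qed

lemma sum_erlang_CDF_ge:
  assumes l: "0 < l" and K: "1 \<le> K" and "y \<le> t"
  shows "ennreal (l * (1 - erlang_CDF (K - 1) l t) * y) \<le> ennreal (\<Sum>k<K. erlang_CDF k l y)"
proof (cases "y < 0")
  case True
  have "l * (1 - erlang_CDF (K - 1) l t) * y \<le> 0"
    using True l erlang_CDF_le_1[OF l, of "K - 1" t] by (intro mult_nonneg_nonpos) auto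
  then show ?thesis by (simp add: ennreal_eq_0_iff ennreal_neg)
next
  case False
  then have y: "0 \<le> y" by simp
  have "ennreal (l * (1 - erlang_CDF (K - 1) l t) * y) =
      (\<integral>\<^sup>+ x. ennreal (l * (1 - erlang_CDF (K - 1) l t)) * indicator {0..y} x \<partial>lborel)"
    using y l erlang_CDF_le_1[OF l, of "K - 1" t]
    by (simp add: nn_integral_cmult_indicator ennreal_mult)
  also have "\<dots> \<le> (\<integral>\<^sup>+ x. ennreal (\<Sum>k<K. erlang_density k l x) * indicator {..y} x \<partial>lborel)"
  proof (intro nn_integral_mono)
    fix x :: real
    show "ennreal (l * (1 - erlang_CDF (K - 1) l t)) * indicator {0..y} x
        \<le> ennreal (\<Sum>k<K. erlang_density k l x) * indicator {..y} x"
    proof (cases "0 \<le> x \<and> x \<le> y")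
      case True
      then have "(\<Sum>k<K. erlang_density k l x) = l * (1 - erlang_CDF (K - 1) l x)"
        using K by (intro sum_erlang_density) auto
      moreover have "erlang_CDF (K - 1) l x \<le> erlang_CDF (K - 1) l t"
        using True \<open>y \<le> t\<close> l by (intro erlang_CDF_mono) auto
      ultimately have "l * (1 - erlang_CDF (K - 1) l t) \<le> (\<Sum>k<K. erlang_density k l x)"
        using l by (simp add: mult_left_mono)
      then show ?thesis using True by (auto split: split_indicator intro: ennreal_leI)
    qed auto
  qed
  also have "\<dots> = ennreal (\<Sum>k<K. erlang_CDF k l y)"
    by (rule sum_erlang_CDF_eq_nn_integral[OF l, symmetric])
  finally show ?thesis .
qed

text \<open>Chebyshev's inequality for the Erlang law, whose mean is \<open>(k + 1) / l\<close> and variance \<open>(k + 1) / l\<^sup>2\<close>.\<close>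
lemma erlang_CDF_below_half_mean:
  assumes l: "0 < l" and t: "0 < t" "2 * l * t \<le> real k + 1"
  shows "erlang_CDF k l t \<le> 2 / (l * t)"
proof -
  define D where "D = density lborel (erlang_density k l)"
  interpret D: prob_space D
    unfolding D_def using l by (rule prob_space_erlang_density)
  have X: "distributed D lborel (\<lambda>x. x) (erlang_density k l)"
    using l by (intro erlang_distributedI) (auto simp: D_def emeasure_erlang_density[unfolded atMost_def])
  define \<mu> where "\<mu> = (real k + 1) / l"
  have mean: "D.expectation (\<lambda>x. x) = \<mu>"
    using D.erlang_ith_moment[OF l X, of 1] by (simp add: \<mu>_def)
  have var: "D.variance (\<lambda>x. x) = (real k + 1) / l\<^sup>2"
    using D.erlang_distributed_variance[OF l X] by simp
  have \<mu>: "0 < \<mu>" "t \<le> \<mu> / 2"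
    using l t by (simp_all add: \<mu>_def field_simps)
  have "erlang_CDF k l t = D.prob {x \<in> space D. x \<le> t}"
    using D.erlang_distributed_le[OF X l] t by simp
  also have "\<dots> \<le> D.prob {x \<in> space D. \<mu> - t \<le> \<bar>x - D.expectation (\<lambda>x. x)\<bar>}"
    unfolding mean by (intro D.finite_measure_mono) (auto simp: D_def)
  also have "\<dots> \<le> D.variance (\<lambda>x. x) / (\<mu> - t)\<^sup>2"
    using D.erlang_ith_moment_integrable[OF l X, of 2] \<mu>
    by (intro D.Chebyshev_inequality) (auto simp: D_def)
  also have "\<dots> \<le> ((real k + 1) / l\<^sup>2) / (\<mu> / 2)\<^sup>2"
    unfolding var using \<mu> l by (intro divide_left_mono power_mono mult_pos_pos) auto
  also have "\<dots> = 4 / (real k + 1)"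
    using l by (simp add: \<mu>_def power_divide) (simp add: power2_eq_square divide_simps)
  also have "\<dots> \<le> 4 / (2 * l * t)"
    using l t by (intro divide_left_mono) auto
  finally show ?thesis by simp
qed

lemma borel_measurable_erlang_CDF [measurable]: "erlang_CDF k l \<in> borel_measurable borel"
  unfolding erlang_CDF_def[abs_def] by measurable

lemma emeasure_distr_erlang_lessThan:
  assumes G: "distributed M lborel G (erlang_density k l)" and l: "0 < l"
  shows "emeasure (distr M borel G) {..<y} = erlang_CDF k l y"
proof -
  have "distr M borel G = density lborel (erlang_density k l)"
    using distributed_distr_eq_density[OF G] by (simp cong: distr_cong)
  then have "emeasure (distr M borel G) {..<y} =
      (\<integral>\<^sup>+x. ennreal (erlang_density k l x) * indicator {..<y} x \<partial>lborel)"
    by (simp add: emeasure_density)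
  also have "\<dots> = (\<integral>\<^sup>+x. ennreal (erlang_density k l x) * indicator {..y} x \<partial>lborel)"
    using AE_lborel_singleton[of y]
    by (intro nn_integral_cong_AE) (auto elim!: eventually_mono split: split_indicator)
  also have "\<dots> = erlang_CDF k l y"
    using l by (rule nn_integral_erlang_density)
  finally show ?thesis .
qed

lemma (in prob_space) emeasure_erlang_less_le:
  assumes ind: "indep_var borel X borel G"
    and G: "distributed M lborel G (erlang_density k l)" and l: "0 < l"
  shows "emeasure M {\<omega>\<in>space M. G \<omega> < X \<omega> \<and> X \<omega> \<le> t} =
     (\<integral>\<^sup>+\<omega>. ennreal (erlang_CDF k l (X \<omega>)) * indicator {..t} (X \<omega>) \<partial>M)"
proof -
  have rv: "random_variable borel X" "random_variable borel G"
    using ind by (auto dest: indep_var_rv1 indep_var_rv2)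
  interpret DG: prob_space "distr M borel G" using rv by (intro prob_space_distr) auto
  define A where "A = {p::real\<times>real. snd p < fst p \<and> fst p \<le> t}"
  have A: "A \<in> sets (borel \<Otimes>\<^sub>M borel)"
  proof -
    have "A = {p \<in> space (borel \<Otimes>\<^sub>M borel). snd p < fst p \<and> fst p \<le> t}"
      by (auto simp: A_def space_pair_measure)
    also have "\<dots> \<in> sets (borel \<Otimes>\<^sub>M borel)" by measurable
    finally show ?thesis .
  qed
  have "{\<omega>\<in>space M. G \<omega> < X \<omega> \<and> X \<omega> \<le> t} = (\<lambda>\<omega>. (X \<omega>, G \<omega>)) -` A \<inter> space M"
    by (auto simp: A_def)
  then have "emeasure M {\<omega>\<in>space M. G \<omega> < X \<omega> \<and> X \<omega> \<le> t} =
      emeasure (distr M (borel \<Otimes>\<^sub>M borel) (\<lambda>\<omega>. (X \<omega>, G \<omega>))) A"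
    using A rv by (simp add: emeasure_distr)
  also have "\<dots> = emeasure (distr M borel X \<Otimes>\<^sub>M distr M borel G) A"
    by (metis ind indep_var_distribution_eq)
  also have "\<dots> = (\<integral>\<^sup>+y. emeasure (distr M borel G) (Pair y -` A) \<partial>distr M borel X)"
    using A by (simp add: DG.emeasure_pair_measure_alt)
  also have "\<dots> = (\<integral>\<^sup>+y. ennreal (erlang_CDF k l y) * indicator {..t} y \<partial>distr M borel X)"
  proof (rule nn_integral_cong)
    fix y :: real
    have "Pair y -` A = (if y \<le> t then {..<y} else {})"
      by (auto simp: A_def)
    then show "emeasure (distr M borel G) (Pair y -` A) = ennreal (erlang_CDF k l y) * indicator {..t} y"
      using emeasure_distr_erlang_lessThan[OF G l] by (auto split: split_indicator)
  qed
  also have "\<dots> = (\<integral>\<^sup>+\<omega>. ennreal (erlang_CDF k l (X \<omega>)) * indicator {..t} (X \<omega>) \<partial>M)"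
    using rv by (subst nn_integral_distr) auto
  finally show ?thesis .
qed

section \<open>Independence and second moments\<close>

lemma (in prob_space) indep_var_restrict_compose:
  assumes ind: "indep_vars (\<lambda>_. borel) X I" and AB: "A \<inter> B = {}" "A \<subseteq> I" "B \<subseteq> I"
    and f: "f \<in> borel_measurable (PiM A (\<lambda>_. borel))"
    and g: "g \<in> borel_measurable (PiM B (\<lambda>_. borel))"
  shows "indep_var borel (\<lambda>\<omega>. f (restrict (\<lambda>k. X k \<omega>) A)) borel (\<lambda>\<omega>. g (restrict (\<lambda>k. X k \<omega>) B))"
  using indep_var_compose[OF indep_var_restrict[OF ind AB] f g] by (simp add: comp_def)

lemma (in prob_space) expectation_centered_product_indep:
  fixes X Y :: "'a \<Rightarrow> real"
  assumes ind: "indep_var borel X borel Y" and X: "integrable M X" and Y: "integrable M Y"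
  shows "expectation (\<lambda>\<omega>. (X \<omega> - expectation X) * (Y \<omega> - expectation Y)) = 0"
proof -
  have "indep_var borel ((\<lambda>x. x - expectation X) \<circ> X) borel ((\<lambda>x. x - expectation Y) \<circ> Y)"
    by (rule indep_var_compose[OF ind]) auto
  moreover have "expectation (\<lambda>\<omega>. X \<omega> - expectation X) = 0"
    using X by (simp add: prob_space)
  ultimately show ?thesis
    using X Y indep_var_lebesgue_integral[of "\<lambda>\<omega>. X \<omega> - expectation X" "\<lambda>\<omega>. Y \<omega> - expectation Y"]
    by (simp add: comp_def)
qed

lemma (in prob_space) variance_sum_pairwise_indep:
  fixes X :: "'i \<Rightarrow> 'a \<Rightarrow> real"
  assumes I: "finite I" and [measurable]: "\<And>i. i \<in> I \<Longrightarrow> X i \<in> borel_measurable M"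
    and bnd: "\<And>i \<omega>. i \<in> I \<Longrightarrow> \<bar>X i \<omega>\<bar> \<le> B"
    and ind: "\<And>i j. i \<in> I \<Longrightarrow> j \<in> I \<Longrightarrow> i \<noteq> j \<Longrightarrow> indep_var borel (X i) borel (X j)"
  shows "variance (\<lambda>\<omega>. \<Sum>i\<in>I. X i \<omega>) = (\<Sum>i\<in>I. variance (X i))"
proof -
  define Y where "Y i \<omega> = X i \<omega> - expectation (X i)" for i \<omega>
  have intX: "integrable M (X i)" if "i \<in> I" for i
    using that bnd by (intro integrable_const_bound[where B=B]) auto
  have [measurable]: "Y i \<in> borel_measurable M" if "i \<in> I" for i
    using that unfolding Y_def by measurable
  have bndY: "\<bar>Y i \<omega>\<bar> \<le> B + \<bar>expectation (X i)\<bar>" if "i \<in> I" for i \<omega>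
    using bnd[OF that, of \<omega>] unfolding Y_def by linarith
  have intYY: "integrable M (\<lambda>\<omega>. Y i \<omega> * Y j \<omega>)" if "i \<in> I" "j \<in> I" for i j
    using that bndY[OF that(1)] bndY[OF that(2)] order_trans[OF abs_ge_zero bnd[OF that(1)]]
    by (intro integrable_const_bound[where B="(B + \<bar>expectation (X i)\<bar>) * (B + \<bar>expectation (X j)\<bar>)"])
       (auto simp: abs_mult intro!: AE_I2 mult_mono)
  have cross: "expectation (\<lambda>\<omega>. Y i \<omega> * Y j \<omega>) = 0" if "i \<in> I" "j \<in> I" "i \<noteq> j" for i j
    unfolding Y_def using that intX by (intro expectation_centered_product_indep ind) auto
  have "expectation (\<lambda>\<omega>. \<Sum>i\<in>I. X i \<omega>) = (\<Sum>i\<in>I. expectation (X i))"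
    using intX by (simp add: Bochner_Integration.integral_sum)
  then have "variance (\<lambda>\<omega>. \<Sum>i\<in>I. X i \<omega>) = expectation (\<lambda>\<omega>. (\<Sum>i\<in>I. Y i \<omega>)\<^sup>2)"
    by (simp add: Y_def sum_subtractf)
  also have "\<dots> = expectation (\<lambda>\<omega>. \<Sum>i\<in>I. \<Sum>j\<in>I. Y i \<omega> * Y j \<omega>)"
    by (simp add: power2_eq_square sum_product)
  also have "\<dots> = (\<Sum>i\<in>I. \<Sum>j\<in>I. expectation (\<lambda>\<omega>. Y i \<omega> * Y j \<omega>))"
    using intYY by (simp add: integral_sum integrable_sum)
  also have "\<dots> = (\<Sum>i\<in>I. expectation (\<lambda>\<omega>. Y i \<omega> * Y i \<omega>))"
    using I cross by (intro sum.cong refl) (auto simp: sum.remove intro!: sum.neutral)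
  also have "\<dots> = (\<Sum>i\<in>I. variance (X i))"
    by (simp add: Y_def power2_eq_square)
  finally show ?thesis .
qed

section \<open>The truncated mean of the coalescence times\<close>

text \<open>\<open>trunc_mean c t = E[H; H \<le> t]\<close> when \<open>P(H > x) = 1 / (1 + c x)\<close>.\<close>
definition trunc_mean :: "real \<Rightarrow> real \<Rightarrow> real" where
  "trunc_mean c t = ln (1 + c * t) / c - t / (1 + c * t)"

lemma trunc_mean_nonneg:
  assumes c: "0 < c" and t: "0 \<le> t"
  shows "0 \<le> trunc_mean c t"
proof -
  have p: "0 < 1 + c * t" using c t by (simp add: add_pos_nonneg)
  have "ln (1 / (1 + c * t)) \<le> 1 / (1 + c * t) - 1"
    using p by (intro ln_le_minus_one) simp
  then have "c * (t / (1 + c * t)) \<le> ln (1 + c * t)"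
    using p by (simp add: ln_div field_simps)
  then show ?thesis
    using c by (simp add: trunc_mean_def field_simps)
qed

lemma (in prob_space) nn_integral_truncated_eq_layer_cake:
  assumes [measurable]: "X \<in> borel_measurable M"
  shows "(\<integral>\<^sup>+\<omega>. ennreal (X \<omega>) * indicator {..t} (X \<omega>) \<partial>M) =
    (\<integral>\<^sup>+x. emeasure M {\<omega>\<in>space M. x < X \<omega> \<and> X \<omega> \<le> t} * indicator {0..} x \<partial>lborel)"
proof -
  define f :: "real \<Rightarrow> 'a \<Rightarrow> ennreal"
    where "f x \<omega> = indicator {0..} x * indicator {\<omega>. x < X \<omega> \<and> X \<omega> \<le> t} \<omega>" for x \<omega>
  interpret pair_sigma_finite lborel M ..
  have "case_prod f \<in> borel_measurable (lborel \<Otimes>\<^sub>M M)"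
    unfolding f_def by measurable
  moreover have "(\<integral>\<^sup>+x. f x \<omega> \<partial>lborel) = ennreal (X \<omega>) * indicator {..t} (X \<omega>)" for \<omega>
  proof -
    have "f x \<omega> = indicator {..t} (X \<omega>) * indicator {0..<X \<omega>} x" for x
      by (auto simp: f_def split: split_indicator)
    then have "(\<integral>\<^sup>+x. f x \<omega> \<partial>lborel) = indicator {..t} (X \<omega>) * (\<integral>\<^sup>+x. indicator {0..<X \<omega>} x \<partial>lborel)"
      by (simp add: nn_integral_cmult)
    then show ?thesis
      by (cases "0 \<le> X \<omega>") (auto simp: ennreal_neg mult.commute)
  qed
  moreover have "(\<integral>\<^sup>+\<omega>. f x \<omega> \<partial>M) = emeasure M {\<omega>\<in>space M. x < X \<omega> \<and> X \<omega> \<le> t} * indicator {0..} x" for x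
  proof -
    have "(\<integral>\<^sup>+\<omega>. f x \<omega> \<partial>M) = (\<integral>\<^sup>+\<omega>. indicator {0..} x * indicator {\<omega>\<in>space M. x < X \<omega> \<and> X \<omega> \<le> t} \<omega> \<partial>M)"
      by (intro nn_integral_cong) (auto simp: f_def split: split_indicator)
    then show ?thesis
      by (simp add: nn_integral_cmult mult.commute)
  qed
  ultimately show ?thesis
    using Fubini'[of f] by simp
qed

lemma nn_integral_hyperbolic_tail_diff:
  assumes c: "0 < c" and t: "0 \<le> t"
  shows "(\<integral>\<^sup>+x. ennreal (1 / (1 + c * x) - 1 / (1 + c * t)) * indicator {0..t} x \<partial>lborel) =
    ennreal (trunc_mean c t)"
proof -
  have "(\<integral>\<^sup>+x. ennreal (1 / (1 + c * x) - 1 / (1 + c * t)) * indicator {0..t} x \<partial>lborel) =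
      ennreal ((ln (1 + c * t) / c - t / (1 + c * t)) - (ln (1 + c * 0) / c - 0 / (1 + c * t)))"
  proof (rule nn_integral_FTC_Icc)
    fix x assume x: "x \<in> {0..t}"
    then have pos: "0 < 1 + c * x" "0 < 1 + c * t"
      using c t by (simp_all add: add_pos_nonneg)
    have "((\<lambda>x. ln (1 + c * x) / c - x / (1 + c * t)) has_real_derivative
        (c / (1 + c * x)) / c - 1 / (1 + c * t)) (at x)"
      using pos by (auto intro!: derivative_eq_intros)
    then show "((\<lambda>x. ln (1 + c * x) / c - x / (1 + c * t)) has_real_derivative
        1 / (1 + c * x) - 1 / (1 + c * t)) (at x)"
      using c by simp
    have "1 + c * x \<le> 1 + c * t" using x c by (simp add: mult_left_mono)
    then show "0 \<le> 1 / (1 + c * x) - 1 / (1 + c * t)"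
      using pos by (simp add: frac_le)
  qed (use t in auto)
  then show ?thesis by (simp add: trunc_mean_def)
qed

lemma (in prob_space) nn_integral_truncated_hyperbolic_tail:
  assumes c: "0 < c" and [measurable]: "X \<in> borel_measurable M"
    and tail: "\<And>x. 0 \<le> x \<Longrightarrow> measure M {\<omega>\<in>space M. X \<omega> > x} = 1 / (1 + c * x)"
    and t: "0 \<le> t"
  shows "(\<integral>\<^sup>+\<omega>. ennreal (X \<omega>) * indicator {..t} (X \<omega>) \<partial>M) = ennreal (trunc_mean c t)"
proof -
  have layer: "emeasure M {\<omega>\<in>space M. x < X \<omega> \<and> X \<omega> \<le> t} * indicator {0..} x =
      ennreal (1 / (1 + c * x) - 1 / (1 + c * t)) * indicator {0..t} x" for x
  proof (cases "0 \<le> x \<and> x \<le> t")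
    case True
    have "{\<omega>\<in>space M. x < X \<omega> \<and> X \<omega> \<le> t} = {\<omega>\<in>space M. X \<omega> > x} - {\<omega>\<in>space M. X \<omega> > t}"
      by auto
    moreover have "measure M ({\<omega>\<in>space M. X \<omega> > x} - {\<omega>\<in>space M. X \<omega> > t}) =
        1 / (1 + c * x) - 1 / (1 + c * t)"
      using True tail[of x] tail[of t] by (subst finite_measure_Diff) auto
    ultimately show ?thesis
      using True by (simp add: emeasure_eq_measure)
  next
    case out: False
    show ?thesis
    proof (cases "0 \<le> x")
      case True
      with out have "{\<omega>\<in>space M. x < X \<omega> \<and> X \<omega> \<le> t} = {}" by auto
      then have "emeasure M {\<omega>\<in>space M. x < X \<omega> \<and> X \<omega> \<le> t} = 0"
        by (simp only: emeasure_empty)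
      then show ?thesis using out by simp
    qed simp
  qed
  show ?thesis
    by (simp add: nn_integral_truncated_eq_layer_cake layer nn_integral_hyperbolic_tail_diff c t)
qed

section \<open>The coalescent point process\<close>

lemma maxH_le:
  assumes "0 \<le> t" "\<forall>i\<in>{1..<n}. H i \<omega> \<le> t"
  shows "maxH H n \<omega> \<le> t"
  using assms by (auto simp: maxH_def)

locale coalescent_point_process = prob_space M for M :: "'a measure" +
  fixes c \<theta> :: real and H :: "nat \<Rightarrow> 'a \<Rightarrow> real" and E :: "nat \<Rightarrow> nat \<Rightarrow> 'a \<Rightarrow> real"
  assumes c_pos: "0 < c" and \<theta>_pos: "0 < \<theta>"
    and indep: "indep_vars (\<lambda>_. borel) (driving H E) driving_index"
    and H_dist: "\<And>i x. 1 \<le> i \<Longrightarrow> x \<ge> 0 \<Longrightarrow>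
                    measure M {\<omega> \<in> space M. H i \<omega> > x} = 1 / (1 + c * x)"
    and E_dist: "\<And>i j. 1 \<le> j \<Longrightarrow> distributed M lborel (E i j) (exponential_density \<theta>)"
begin

lemma H_measurable [measurable]: "1 \<le> i \<Longrightarrow> H i \<in> borel_measurable M"
  using indep unfolding indep_vars_def by (force simp: driving_index_def driving_def)

lemma E_measurable [measurable]: "1 \<le> j \<Longrightarrow> E i j \<in> borel_measurable M"
  using distributed_measurable[OF E_dist] by simp

lemma atom_measurable [measurable]: "atom E i k \<in> borel_measurable M"
  unfolding atom_def[abs_def] by measurable

lemma atom_distributed:
  assumes k: "1 \<le> k"
  shows "distributed M lborel (atom E i k) (erlang_density (k - 1) \<theta>)"
proof -
  have "indep_vars (\<lambda>_. borel)
      (\<lambda>j \<omega>. (\<lambda>x. x (Inr (i, j))) (restrict (\<lambda>q. driving H E q \<omega>) {Inr (i, j)})) {1..k}"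
    by (intro indep_vars_compose2[OF indep_vars_restrict[OF indep]])
       (auto simp: driving_index_def disjoint_family_on_def)
  then have "indep_vars (\<lambda>_. borel) (E i) {1..k}"
    by (simp add: driving_def)
  then have "distributed M lborel (\<lambda>\<omega>. \<Sum>j\<in>{1..k}. E i j \<omega>) (erlang_density (card {1..k} - 1) \<theta>)"
    using k E_dist by (intro exponential_distributed_sum[OF _ _ \<theta>_pos]) auto
  then show ?thesis
    by (simp add: atom_def[abs_def])
qed

lemma AE_E_nonneg: "AE \<omega> in M. \<forall>i j. 1 \<le> j \<longrightarrow> 0 \<le> E i j \<omega>"
proof -
  have "AE \<omega> in M. 0 \<le> E i j \<omega>" if j: "1 \<le> j" for i j
  proof (rule AE_distrD[of "E i j" M lborel])
    show "E i j \<in> measurable M lborel" using E_measurable[OF j] by simp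
    have "AE x in density lborel (exponential_density \<theta>). 0 \<le> x"
      by (subst AE_density) (auto simp: erlang_density_def)
    then show "AE x in distr M lborel (E i j). 0 \<le> x"
      unfolding distributed_distr_eq_density[OF E_dist[OF j]] .
  qed
  then show ?thesis
    by (auto simp: AE_all_countable)
qed

lemma indep_H_atom:
  assumes "1 \<le> i"
  shows "indep_var borel (H i) borel (atom E i k)"
proof -
  have "indep_var borel (\<lambda>\<omega>. (\<lambda>x. x (Inl i)) (restrict (\<lambda>q. driving H E q \<omega>) {Inl i}))
      borel (\<lambda>\<omega>. (\<lambda>x. \<Sum>j\<in>{1..k}. x (Inr (i, j))) (restrict (\<lambda>q. driving H E q \<omega>) (Inr ` ({i} \<times> {1..k}))))"
    by (rule indep_var_restrict_compose[OF indep]) (use assms in \<open>auto simp: driving_index_def\<close>)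
  then show ?thesis
    by (simp add: driving_def atom_def[abs_def])
qed

lemma le_of_atom_less:
  assumes nonneg: "\<forall>i j. 1 \<le> j \<longrightarrow> 0 \<le> E i j \<omega>"
    and "t < atom E i (K + 1) \<omega>" "atom E i j \<omega> < h" "h \<le> t"
  shows "j \<le> K"
proof (rule ccontr)
  assume "\<not> j \<le> K"
  then have "atom E i (K + 1) \<omega> \<le> atom E i j \<omega>"
    unfolding atom_def using nonneg by (intro sum_mono2) auto
  then show False using assms by linarith
qed

text \<open>\<open>Y\<^sub>i\<close>, \<open>Z\<close> and the complement of the good event of the proof sketch.\<close>
definition trunc_count :: "nat \<Rightarrow> real \<Rightarrow> nat \<Rightarrow> 'a \<Rightarrow> real" where
  "trunc_count K t i \<omega> = (\<Sum>k\<in>{1..K}. if atom E i k \<omega> < H i \<omega> \<and> H i \<omega> \<le> t then 1 else 0)"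

definition trunc_sum :: "nat \<Rightarrow> real \<Rightarrow> nat \<Rightarrow> 'a \<Rightarrow> real" where
  "trunc_sum K t n \<omega> = (\<Sum>i\<in>{1..n-1}. trunc_count K t i \<omega>)"

definition trunc_failure :: "real \<Rightarrow> nat \<Rightarrow> nat \<Rightarrow> 'a set" where
  "trunc_failure t K n = (\<Union>i\<in>{1..n-1}. {\<omega>\<in>space M. t < H i \<omega>}) \<union>
     (\<Union>i\<in>{0..n-1}. {\<omega>\<in>space M. atom E i (K + 1) \<omega> \<le> t})"

lemma trunc_count_measurable [measurable]: "1 \<le> i \<Longrightarrow> trunc_count K t i \<in> borel_measurable M"
  unfolding trunc_count_def by measurable

lemma trunc_count_nonneg: "0 \<le> trunc_count K t i \<omega>"
  unfolding trunc_count_def by (intro sum_nonneg) auto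

lemma trunc_count_le: "trunc_count K t i \<omega> \<le> real K"
proof -
  have "trunc_count K t i \<omega> \<le> (\<Sum>k\<in>{1..K}. 1)"
    unfolding trunc_count_def by (intro sum_mono) auto
  then show ?thesis by simp
qed

lemma integrable_trunc_count: "1 \<le> i \<Longrightarrow> integrable M (trunc_count K t i)"
  using trunc_count_nonneg trunc_count_le by (intro integrable_const_bound[where B="real K"]) auto

lemma indep_trunc_count:
  assumes "1 \<le> i" "1 \<le> l" "i \<noteq> l"
  shows "indep_var borel (trunc_count K t i) borel (trunc_count K t l)"
proof -
  define block :: "nat \<Rightarrow> (nat + nat \<times> nat) set" where "block i = insert (Inl i) (Inr ` ({i} \<times> {1..K}))" for i
  define f :: "nat \<Rightarrow> (nat + nat \<times> nat \<Rightarrow> real) \<Rightarrow> real" where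
    "f i x = (\<Sum>k\<in>{1..K}. if (\<Sum>j\<in>{1..k}. x (Inr (i, j))) < x (Inl i) \<and> x (Inl i) \<le> t then 1 else 0)" for i x
  have f: "f i \<in> borel_measurable (PiM (block i) (\<lambda>_. borel))" for i
    unfolding f_def block_def by measurable
  have "trunc_count K t i = (\<lambda>\<omega>. f i (restrict (\<lambda>q. driving H E q \<omega>) (block i)))" for i
    by (auto simp: trunc_count_def f_def block_def driving_def atom_def intro!: ext sum.cong)
  moreover have "indep_var borel (\<lambda>\<omega>. f i (restrict (\<lambda>q. driving H E q \<omega>) (block i)))
      borel (\<lambda>\<omega>. f l (restrict (\<lambda>q. driving H E q \<omega>) (block l)))"
    by (rule indep_var_restrict_compose[OF indep _ _ _ f f]) (use assms in \<open>auto simp: block_def driving_index_def\<close>)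
  ultimately show ?thesis
    by simp
qed

lemma ennreal_expectation_trunc_count:
  assumes i: "1 \<le> i"
  shows "ennreal (expectation (trunc_count K t i)) =
    (\<integral>\<^sup>+\<omega>. ennreal (\<Sum>k<K. erlang_CDF k \<theta> (H i \<omega>)) * indicator {..t} (H i \<omega>) \<partial>M)"
proof -
  define A where "A k = {\<omega>\<in>space M. atom E i k \<omega> < H i \<omega> \<and> H i \<omega> \<le> t}" for k
  have A: "A k \<in> sets M" for k
    unfolding A_def using i by measurable
  have "ennreal (expectation (trunc_count K t i)) = (\<integral>\<^sup>+\<omega>. ennreal (trunc_count K t i \<omega>) \<partial>M)"
    using i trunc_count_nonneg by (intro nn_integral_eq_integral[symmetric] integrable_trunc_count) auto
  also have "\<dots> = (\<integral>\<^sup>+\<omega>. (\<Sum>k\<in>{1..K}. indicator (A k) \<omega>) \<partial>M)"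
  proof (intro nn_integral_cong)
    fix \<omega> assume "\<omega> \<in> space M"
    then have "(\<Sum>k\<in>{1..K}. indicator (A k) \<omega>) =
        (\<Sum>k\<in>{1..K}. ennreal (if atom E i k \<omega> < H i \<omega> \<and> H i \<omega> \<le> t then 1 else 0))"
      by (intro sum.cong) (auto simp: A_def)
    also have "\<dots> = ennreal (trunc_count K t i \<omega>)"
      unfolding trunc_count_def by (rule sum_ennreal) simp
    finally show "ennreal (trunc_count K t i \<omega>) = (\<Sum>k\<in>{1..K}. indicator (A k) \<omega>)" ..
  qed
  also have "\<dots> = (\<Sum>k\<in>{1..K}. emeasure M (A k))"
    using A by (subst nn_integral_sum) auto
  also have "\<dots> = (\<Sum>k\<in>{1..K}. \<integral>\<^sup>+\<omega>. ennreal (erlang_CDF (k - 1) \<theta> (H i \<omega>)) * indicator {..t} (H i \<omega>) \<partial>M)"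
    unfolding A_def
    by (intro sum.cong refl emeasure_erlang_less_le[OF indep_H_atom[OF i] atom_distributed \<theta>_pos]) auto
  also have "\<dots> = (\<integral>\<^sup>+\<omega>. (\<Sum>k<K. ennreal (erlang_CDF k \<theta> (H i \<omega>)) * indicator {..t} (H i \<omega>)) \<partial>M)"
    using i by (subst nn_integral_sum) (auto simp: sum.atLeast1_atMost_eq)
  also have "\<dots> = (\<integral>\<^sup>+\<omega>. ennreal (\<Sum>k<K. erlang_CDF k \<theta> (H i \<omega>)) * indicator {..t} (H i \<omega>) \<partial>M)"
    using \<theta>_pos by (simp add: sum_distrib_right[symmetric])
  finally show ?thesis .
qed

lemma expectation_trunc_count_le:
  assumes i: "1 \<le> i" and t: "0 \<le> t"
  shows "expectation (trunc_count K t i) \<le> \<theta> * trunc_mean c t"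
proof -
  have "ennreal (expectation (trunc_count K t i)) \<le>
      (\<integral>\<^sup>+\<omega>. ennreal \<theta> * (ennreal (H i \<omega>) * indicator {..t} (H i \<omega>)) \<partial>M)"
    unfolding ennreal_expectation_trunc_count[OF i]
  proof (intro nn_integral_mono)
    fix \<omega>
    have "ennreal (\<Sum>k<K. erlang_CDF k \<theta> (H i \<omega>)) \<le> ennreal \<theta> * ennreal (H i \<omega>)"
      using sum_erlang_CDF_le[OF \<theta>_pos] \<theta>_pos by (simp add: ennreal_mult')
    then show "ennreal (\<Sum>k<K. erlang_CDF k \<theta> (H i \<omega>)) * indicator {..t} (H i \<omega>) \<le>
        ennreal \<theta> * (ennreal (H i \<omega>) * indicator {..t} (H i \<omega>))"
      by (auto split: split_indicator)
  qed
  also have "\<dots> = ennreal (\<theta> * trunc_mean c t)"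
    using \<theta>_pos i t
    by (simp add: nn_integral_cmult nn_integral_truncated_hyperbolic_tail[OF c_pos _ H_dist] ennreal_mult')
  finally show ?thesis
    using \<theta>_pos trunc_mean_nonneg[OF c_pos t] by (simp add: ennreal_le_iff)
qed

lemma expectation_trunc_count_ge:
  assumes i: "1 \<le> i" and K: "1 \<le> K" and t: "0 \<le> t"
  shows "\<theta> * (1 - erlang_CDF (K - 1) \<theta> t) * trunc_mean c t \<le> expectation (trunc_count K t i)"
proof -
  define \<kappa> where "\<kappa> = \<theta> * (1 - erlang_CDF (K - 1) \<theta> t)"
  have \<kappa>: "0 \<le> \<kappa>"
    using \<theta>_pos erlang_CDF_le_1[OF \<theta>_pos] by (simp add: \<kappa>_def)
  have "ennreal (\<kappa> * trunc_mean c t) =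
      (\<integral>\<^sup>+\<omega>. ennreal \<kappa> * (ennreal (H i \<omega>) * indicator {..t} (H i \<omega>)) \<partial>M)"
    using \<kappa> i t
    by (simp add: nn_integral_cmult nn_integral_truncated_hyperbolic_tail[OF c_pos _ H_dist] ennreal_mult')
  also have "\<dots> \<le> ennreal (expectation (trunc_count K t i))"
    unfolding ennreal_expectation_trunc_count[OF i]
  proof (intro nn_integral_mono)
    fix \<omega>
    show "ennreal \<kappa> * (ennreal (H i \<omega>) * indicator {..t} (H i \<omega>)) \<le>
        ennreal (\<Sum>k<K. erlang_CDF k \<theta> (H i \<omega>)) * indicator {..t} (H i \<omega>)"
    proof (cases "H i \<omega> \<le> t")
      case True
      have "ennreal \<kappa> * ennreal (H i \<omega>) = ennreal (\<kappa> * H i \<omega>)"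
        using \<kappa> by (cases "H i \<omega> < 0") (simp_all add: ennreal_neg mult_nonneg_nonpos ennreal_mult)
      also have "\<dots> \<le> ennreal (\<Sum>k<K. erlang_CDF k \<theta> (H i \<omega>))"
        unfolding \<kappa>_def by (rule sum_erlang_CDF_ge[OF \<theta>_pos K True])
      finally show ?thesis using True by simp
    qed simp
  qed
  finally have "ennreal (\<kappa> * trunc_mean c t) \<le> ennreal (expectation (trunc_count K t i))" .
  moreover have "0 \<le> expectation (trunc_count K t i)"
    by (simp add: integral_nonneg_AE trunc_count_nonneg)
  ultimately show ?thesis
    by (simp add: \<kappa>_def ennreal_le_iff)
qed

lemma variance_trunc_count_le:
  assumes i: "1 \<le> i"
  shows "variance (trunc_count K t i) \<le> real K * expectation (trunc_count K t i)"
proof -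
  let ?Y = "trunc_count K t i"
  have int: "integrable M ?Y" "integrable M (\<lambda>\<omega>. (?Y \<omega>)\<^sup>2)"
    using i trunc_count_nonneg trunc_count_le
    by (auto intro!: integrable_const_bound[where B="real K ^ 2"] integrable_trunc_count power_mono)
  have "variance ?Y \<le> expectation (\<lambda>\<omega>. (?Y \<omega>)\<^sup>2)"
    using variance_eq[OF int] by simp
  also have "\<dots> \<le> expectation (\<lambda>\<omega>. real K * ?Y \<omega>)"
    using int trunc_count_nonneg trunc_count_le
    by (intro integral_mono) (auto simp: power2_eq_square intro: mult_right_mono)
  finally show ?thesis by simp
qed

lemma card_branch_mutations:
  assumes nonneg: "\<forall>i j. 1 \<le> j \<longrightarrow> 0 \<le> E i j \<omega>"
    and "H i \<omega> \<le> t" "t < atom E i (K + 1) \<omega>"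
  shows "real (card {j. 1 \<le> j \<and> atom E i j \<omega> < H i \<omega>}) = trunc_count K t i \<omega>"
proof -
  have "{j. 1 \<le> j \<and> atom E i j \<omega> < H i \<omega>} = {j\<in>{1..K}. atom E i j \<omega> < H i \<omega>}"
    using le_of_atom_less[OF nonneg] assms by auto
  then show ?thesis
    using assms by (simp add: trunc_count_def sum.inter_filter[symmetric])
qed

lemma S_between_trunc_sum:
  assumes nonneg: "\<forall>i j. 1 \<le> j \<longrightarrow> 0 \<le> E i j \<omega>" and t: "0 \<le> t"
    and good: "\<omega> \<in> space M" "\<omega> \<notin> trunc_failure t K n"
  shows "trunc_sum K t n \<omega> \<le> real (S H E n \<omega>)"
    and "real (S H E n \<omega>) \<le> trunc_sum K t n \<omega> + real K"
proof -
  have H: "\<forall>i\<in>{1..n-1}. H i \<omega> \<le> t" and atom: "\<forall>i\<in>{0..n-1}. t < atom E i (K + 1) \<omega>"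
    using good by (auto simp: trunc_failure_def not_less)
  define row where "row i = {j. 1 \<le> j \<and> atom E i j \<omega> < H i \<omega>}" for i
  have "row i \<subseteq> {1..K}" if "i \<in> {1..n-1}" for i
    using that H atom le_of_atom_less[OF nonneg, of t i K _ "H i \<omega>"] by (auto simp: row_def)
  then have row: "finite (row i)" "real (card (row i)) = trunc_count K t i \<omega>" if "i \<in> {1..n-1}" for i
    using that H atom card_branch_mutations[OF nonneg] by (auto simp: row_def intro: finite_subset)
  have "{(i, j). 1 \<le> i \<and> i \<le> n - 1 \<and> 1 \<le> j \<and> atom E i j \<omega> < H i \<omega>} = Sigma {1..n-1} row"
    by (auto simp: row_def)
  then have branches: "real (card {(i, j). 1 \<le> i \<and> i \<le> n - 1 \<and> 1 \<le> j \<and> atom E i j \<omega> < H i \<omega>}) =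
      trunc_sum K t n \<omega>"
    using row by (simp add: card_SigmaI trunc_sum_def)
  have "maxH H n \<omega> \<le> t"
    using H t by (intro maxH_le) auto
  then have "{j. 1 \<le> j \<and> atom E 0 j \<omega> < maxH H n \<omega>} \<subseteq> {1..K}"
    using atom le_of_atom_less[OF nonneg, of t 0 K _ "maxH H n \<omega>"] by auto
  then have root: "card {j. 1 \<le> j \<and> atom E 0 j \<omega> < maxH H n \<omega>} \<le> K"
    using card_mono[of "{1..K}"] by fastforce
  show "trunc_sum K t n \<omega> \<le> real (S H E n \<omega>)"
    using branches by (simp add: S_def)
  show "real (S H E n \<omega>) \<le> trunc_sum K t n \<omega> + real K"
    using branches root by (simp add: S_def)
qed

lemma trunc_sum_measurable [measurable]: "trunc_sum K t n \<in> borel_measurable M"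
  unfolding trunc_sum_def[abs_def] by (intro borel_measurable_sum) auto

lemma abs_trunc_sum_le: "\<bar>trunc_sum K t n \<omega>\<bar> \<le> real (n - 1) * real K"
proof -
  have "0 \<le> trunc_sum K t n \<omega>"
    unfolding trunc_sum_def by (intro sum_nonneg trunc_count_nonneg)
  moreover have "trunc_sum K t n \<omega> \<le> (\<Sum>i\<in>{1..n-1}. real K)"
    unfolding trunc_sum_def by (intro sum_mono trunc_count_le)
  ultimately show ?thesis by simp
qed

lemma expectation_trunc_sum: "expectation (trunc_sum K t n) = (\<Sum>i\<in>{1..n-1}. expectation (trunc_count K t i))"
  unfolding trunc_sum_def[abs_def] by (auto intro!: Bochner_Integration.integral_sum integrable_trunc_count)

lemma expectation_trunc_sum_le:
  assumes "0 \<le> t"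
  shows "expectation (trunc_sum K t n) \<le> real (n - 1) * (\<theta> * trunc_mean c t)"
  using sum_mono[of "{1..n-1}" "\<lambda>i. expectation (trunc_count K t i)" "\<lambda>_. \<theta> * trunc_mean c t"]
    expectation_trunc_count_le assms by (simp add: expectation_trunc_sum)

lemma expectation_trunc_sum_ge:
  assumes t: "0 < t" and K: "2 * \<theta> * t \<le> real K"
  shows "real (n - 1) * (\<theta> * (1 - 2 / (\<theta> * t)) * trunc_mean c t) \<le> expectation (trunc_sum K t n)"
proof -
  have "0 < 2 * \<theta> * t" using \<theta>_pos t by simp
  then have K1: "1 \<le> K" using K by linarith
  then have "erlang_CDF (K - 1) \<theta> t \<le> 2 / (\<theta> * t)"
    using K by (intro erlang_CDF_below_half_mean[OF \<theta>_pos t]) (simp add: of_nat_diff)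
  then have "\<theta> * (1 - 2 / (\<theta> * t)) * trunc_mean c t \<le> \<theta> * (1 - erlang_CDF (K - 1) \<theta> t) * trunc_mean c t"
    using t \<theta>_pos trunc_mean_nonneg[OF c_pos, of t] by (intro mult_right_mono mult_left_mono) auto
  then have "(\<Sum>i\<in>{1..n-1}. \<theta> * (1 - 2 / (\<theta> * t)) * trunc_mean c t) \<le>
      (\<Sum>i\<in>{1..n-1}. expectation (trunc_count K t i))"
    using expectation_trunc_count_ge[OF _ K1] t by (intro sum_mono) (simp add: order_trans)
  then show ?thesis
    by (simp add: expectation_trunc_sum)
qed

lemma variance_trunc_sum_le:
  assumes "0 \<le> t"
  shows "variance (trunc_sum K t n) \<le> real (n - 1) * (real K * (\<theta> * trunc_mean c t))"
proof -
  have "variance (trunc_sum K t n) = (\<Sum>i\<in>{1..n-1}. variance (trunc_count K t i))"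
    unfolding trunc_sum_def[abs_def] using trunc_count_nonneg trunc_count_le
    by (intro variance_sum_pairwise_indep[where B="real K"] indep_trunc_count) auto
  also have "\<dots> \<le> (\<Sum>i\<in>{1..n-1}. real K * (\<theta> * trunc_mean c t))"
  proof (rule sum_mono)
    fix i assume "i \<in> {1..n-1}"
    then have "1 \<le> i" by simp
    then have "real K * expectation (trunc_count K t i) \<le> real K * (\<theta> * trunc_mean c t)"
      using expectation_trunc_count_le assms by (intro mult_left_mono) auto
    then show "variance (trunc_count K t i) \<le> real K * (\<theta> * trunc_mean c t)"
      using variance_trunc_count_le[OF \<open>1 \<le> i\<close>, of K t] by linarith
  qed
  finally show ?thesis by simp
qed

lemma prob_trunc_failure_le:
  assumes n: "1 \<le> n" and t: "0 < t" and K: "2 * \<theta> * t \<le> real K"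
  shows "measure M (trunc_failure t K n) \<le> real n / (c * t) + 2 * real n / (\<theta> * t)"
proof -
  have "measure M (\<Union>i\<in>{1..n-1}. {\<omega>\<in>space M. t < H i \<omega>}) \<le> (\<Sum>i\<in>{1..n-1}. measure M {\<omega>\<in>space M. t < H i \<omega>})"
    by (intro finite_measure_subadditive_finite) auto
  also have "\<dots> = real (n - 1) / (1 + c * t)"
    using t by (simp add: H_dist)
  also have "\<dots> \<le> real n / (c * t)"
    using c_pos t by (intro frac_le) auto
  finally have H: "measure M (\<Union>i\<in>{1..n-1}. {\<omega>\<in>space M. t < H i \<omega>}) \<le> real n / (c * t)" .
  have "measure M (\<Union>i\<in>{0..n-1}. {\<omega>\<in>space M. atom E i (K + 1) \<omega> \<le> t}) \<le>
      (\<Sum>i\<in>{0..n-1}. measure M {\<omega>\<in>space M. atom E i (K + 1) \<omega> \<le> t})"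
    by (intro finite_measure_subadditive_finite) auto
  also have "\<dots> = real n * erlang_CDF K \<theta> t"
    using n t erlang_distributed_le[OF atom_distributed \<theta>_pos, of "K + 1"] by simp
  also have "\<dots> \<le> real n * (2 / (\<theta> * t))"
    using K t by (intro mult_left_mono erlang_CDF_below_half_mean[OF \<theta>_pos]) auto
  finally have atom: "measure M (\<Union>i\<in>{0..n-1}. {\<omega>\<in>space M. atom E i (K + 1) \<omega> \<le> t}) \<le> 2 * real n / (\<theta> * t)"
    by (simp add: mult.commute)
  have "measure M (trunc_failure t K n) \<le>
      measure M (\<Union>i\<in>{1..n-1}. {\<omega>\<in>space M. t < H i \<omega>}) +
      measure M (\<Union>i\<in>{0..n-1}. {\<omega>\<in>space M. atom E i (K + 1) \<omega> \<le> t})"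
    unfolding trunc_failure_def by (intro measure_Un_le sets.finite_UN) auto
  then show ?thesis
    using H atom by linarith
qed

lemma trunc_failure_sets [measurable]: "trunc_failure t K n \<in> sets M"
  unfolding trunc_failure_def by (intro sets.Un sets.finite_UN) auto

lemma prob_trunc_sum_deviation_le:
  assumes t: "0 \<le> t" and \<delta>: "0 < \<delta>"
  shows "measure M {\<omega>\<in>space M. \<delta> \<le> \<bar>trunc_sum K t n \<omega> - expectation (trunc_sum K t n)\<bar>} \<le>
    real (n - 1) * (real K * (\<theta> * trunc_mean c t)) / \<delta>\<^sup>2"
proof -
  have "(trunc_sum K t n \<omega>)\<^sup>2 \<le> (real (n - 1) * real K)\<^sup>2" for \<omega>
    using abs_trunc_sum_le[of K t n \<omega>] by (simp add: abs_le_square_iff[symmetric])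
  then have "measure M {\<omega>\<in>space M. \<delta> \<le> \<bar>trunc_sum K t n \<omega> - expectation (trunc_sum K t n)\<bar>} \<le>
      variance (trunc_sum K t n) / \<delta>\<^sup>2"
    using \<delta> by (intro Chebyshev_inequality integrable_const_bound[where B="(real (n - 1) * real K)\<^sup>2"]) auto
  also have "\<dots> \<le> real (n - 1) * (real K * (\<theta> * trunc_mean c t)) / \<delta>\<^sup>2"
    using t by (intro divide_right_mono variance_trunc_sum_le) auto
  finally show ?thesis .
qed

lemma prob_S_deviation_le:
  assumes n: "1 \<le> n" and t: "0 < t" and K: "2 * \<theta> * t \<le> real K" and \<delta>: "0 < \<delta>"
    and r: "\<bar>expectation (trunc_sum K t n) - a\<bar> + \<delta> + real K \<le> r"
  shows "measure M {\<omega>\<in>space M. r < \<bar>real (S H E n \<omega>) - a\<bar>} \<le>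
    real n / (c * t) + 2 * real n / (\<theta> * t) + real (n - 1) * (real K * (\<theta> * trunc_mean c t)) / \<delta>\<^sup>2"
proof -
  let ?Z = "trunc_sum K t n"
  define D where "D = {\<omega>\<in>space M. \<delta> \<le> \<bar>?Z \<omega> - expectation ?Z\<bar>}"
  have D: "D \<in> sets M"
    unfolding D_def by measurable
  have "AE \<omega> in M. \<omega> \<in> {\<omega>\<in>space M. r < \<bar>real (S H E n \<omega>) - a\<bar>} \<longrightarrow> \<omega> \<in> trunc_failure t K n \<union> D"
    using AE_E_nonneg
  proof eventually_elim
    case (elim \<omega>)
    have "\<bar>real (S H E n \<omega>) - a\<bar> \<le> r" if "\<omega> \<in> space M" "\<omega> \<notin> trunc_failure t K n \<union> D"
    proof -
      have "?Z \<omega> \<le> real (S H E n \<omega>)" "real (S H E n \<omega>) \<le> ?Z \<omega> + real K"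
        using S_between_trunc_sum[OF elim _ that(1)] t that(2) by auto
      moreover have "\<bar>?Z \<omega> - expectation ?Z\<bar> < \<delta>"
        using that by (auto simp: D_def)
      ultimately show ?thesis
        using r by (simp add: abs_le_iff abs_less_iff) linarith
    qed
    then show ?case
      using not_le by blast
  qed
  then have "measure M {\<omega>\<in>space M. r < \<bar>real (S H E n \<omega>) - a\<bar>} \<le> measure M (trunc_failure t K n \<union> D)"
    using D by (intro finite_measure_mono_AE) auto
  also have "\<dots> \<le> measure M (trunc_failure t K n) + measure M D"
    using D by (intro measure_Un_le) auto
  finally show ?thesis
    using prob_trunc_failure_le[OF n t K] prob_trunc_sum_deviation_le[OF _ \<delta>, of t K n] t
    unfolding D_def by linarith
qed

definition trunc_level :: "real \<Rightarrow> nat" where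
  "trunc_level t = nat \<lceil>2 * \<theta> * t\<rceil>"

lemma trunc_level_ge: "2 * \<theta> * t \<le> real (trunc_level t)"
  unfolding trunc_level_def by (rule real_nat_ceiling_ge)

lemma trunc_level_le:
  assumes "0 \<le> t"
  shows "real (trunc_level t) \<le> 2 * \<theta> * t + 1"
proof -
  have "0 \<le> 2 * \<theta> * t" using \<theta>_pos assms by simp
  then have "real (trunc_level t) = of_int \<lceil>2 * \<theta> * t\<rceil>"
    by (simp add: trunc_level_def)
  then show ?thesis
    using of_int_ceiling_le_add_one[of "2 * \<theta> * t"] by simp
qed

end

lemma tendsto_upper_mean_bound:
  assumes "0 < c" "0 < \<theta>" "0 < s"
  shows "((\<lambda>n::nat. (real n - 1) * (\<theta> * trunc_mean c (real n * s)) / (real n * ln (real n)))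
    \<longlongrightarrow> \<theta> / c) sequentially"
  using assms unfolding trunc_mean_def by real_asymp (simp add: divide_inverse)

lemma tendsto_lower_mean_bound:
  assumes "0 < c" "0 < \<theta>" "0 < s"
  shows "((\<lambda>n::nat. (real n - 1) * (\<theta> * (1 - 2 / (\<theta> * (real n * s))) * trunc_mean c (real n * s)) /
    (real n * ln (real n))) \<longlongrightarrow> \<theta> / c) sequentially"
  using assms unfolding trunc_mean_def by real_asymp (simp add: divide_inverse)

lemma tendsto_level_bound:
  assumes "0 < \<theta>" "0 < s"
  shows "((\<lambda>n::nat. (2 * \<theta> * (real n * s) + 1) / (real n * ln (real n))) \<longlongrightarrow> 0) sequentially"
  using assms by real_asymp

lemma tendsto_variance_bound:
  assumes "0 < c" "0 < \<theta>" "0 < s"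
  shows "((\<lambda>n::nat. (real n - 1) * ((2 * \<theta> * (real n * s) + 1) * (\<theta> * trunc_mean c (real n * s))) /
    (real n * ln (real n))\<^sup>2) \<longlongrightarrow> 0) sequentially"
  using assms unfolding trunc_mean_def by real_asymp

context coalescent_point_process
begin

lemma expectation_trunc_sum_asymp:
  assumes s: "0 < s"
  shows "((\<lambda>n. expectation (trunc_sum (trunc_level (real n * s)) (real n * s) n) / (real n * ln (real n)))
    \<longlongrightarrow> \<theta> / c) sequentially"
proof (rule tendsto_sandwich[OF _ _ tendsto_lower_mean_bound[OF c_pos \<theta>_pos s]
      tendsto_upper_mean_bound[OF c_pos \<theta>_pos s]])
  have n: "0 < real n * s" "0 \<le> real n * ln (real n)" "real (n - 1) = real n - 1" if "2 \<le> n" for n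
    using that s by (auto simp: of_nat_diff)
  show "eventually (\<lambda>n. (real n - 1) * (\<theta> * (1 - 2 / (\<theta> * (real n * s))) * trunc_mean c (real n * s)) /
      (real n * ln (real n)) \<le>
      expectation (trunc_sum (trunc_level (real n * s)) (real n * s) n) / (real n * ln (real n))) sequentially"
    using eventually_ge_at_top[of 2]
  proof eventually_elim
    case (elim n)
    show ?case
      using expectation_trunc_sum_ge[OF n(1)[OF elim] trunc_level_ge, of n] n[OF elim]
      by (intro divide_right_mono) auto
  qed
  show "eventually (\<lambda>n. expectation (trunc_sum (trunc_level (real n * s)) (real n * s) n) /
      (real n * ln (real n)) \<le> (real n - 1) * (\<theta> * trunc_mean c (real n * s)) / (real n * ln (real n)))
      sequentially"
    using eventually_ge_at_top[of 2]
  proof eventually_elim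
    case (elim n)
    show ?case
      using expectation_trunc_sum_le[of "real n * s" "trunc_level (real n * s)" n] n[OF elim]
      by (intro divide_right_mono) auto
  qed
qed

lemma trunc_level_asymp:
  assumes s: "0 < s"
  shows "((\<lambda>n. real (trunc_level (real n * s)) / (real n * ln (real n))) \<longlongrightarrow> 0) sequentially"
proof (rule tendsto_sandwich[OF _ _ tendsto_const tendsto_level_bound[OF \<theta>_pos s]])
  show "eventually (\<lambda>n. 0 \<le> real (trunc_level (real n * s)) / (real n * ln (real n))) sequentially"
    using eventually_ge_at_top[of 1] by eventually_elim simp
  show "eventually (\<lambda>n. real (trunc_level (real n * s)) / (real n * ln (real n)) \<le>
      (2 * \<theta> * (real n * s) + 1) / (real n * ln (real n))) sequentially"
    using eventually_ge_at_top[of 1]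
    by eventually_elim (use s in \<open>auto intro!: divide_right_mono trunc_level_le\<close>)
qed

lemma variance_trunc_sum_bound_asymp:
  assumes s: "0 < s"
  shows "((\<lambda>n. real (n - 1) * (real (trunc_level (real n * s)) * (\<theta> * trunc_mean c (real n * s))) /
    (real n * ln (real n))\<^sup>2) \<longlongrightarrow> 0) sequentially"
proof (rule tendsto_sandwich[OF _ _ tendsto_const tendsto_variance_bound[OF c_pos \<theta>_pos s]])
  have m: "0 \<le> \<theta> * trunc_mean c (real n * s)" for n :: nat
    using \<theta>_pos s trunc_mean_nonneg[OF c_pos, of "real n * s"] by simp
  show "eventually (\<lambda>n. 0 \<le> real (n - 1) * (real (trunc_level (real n * s)) * (\<theta> * trunc_mean c (real n * s))) /
      (real n * ln (real n))\<^sup>2) sequentially"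
    using m by (intro always_eventually allI divide_nonneg_nonneg mult_nonneg_nonneg[OF _ mult_nonneg_nonneg]) auto
  show "eventually (\<lambda>n. real (n - 1) * (real (trunc_level (real n * s)) * (\<theta> * trunc_mean c (real n * s))) /
      (real n * ln (real n))\<^sup>2 \<le>
      (real n - 1) * ((2 * \<theta> * (real n * s) + 1) * (\<theta> * trunc_mean c (real n * s))) / (real n * ln (real n))\<^sup>2)
      sequentially"
    using eventually_ge_at_top[of 1]
  proof eventually_elim
    case (elim n)
    have "real (trunc_level (real n * s)) * (\<theta> * trunc_mean c (real n * s)) \<le>
        (2 * \<theta> * (real n * s) + 1) * (\<theta> * trunc_mean c (real n * s))"
      using m s by (intro mult_right_mono trunc_level_le) auto
    moreover have "real (n - 1) = real n - 1" "0 \<le> real n - 1"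
      using elim by (simp_all add: of_nat_diff)
    ultimately show ?case
      by (simp only:) (intro divide_right_mono mult_left_mono; simp)
  qed
qed

lemma prob_S_ratio_deviation_le:
  assumes n: "2 \<le> n" and s: "0 < s" and K: "2 * \<theta> * (real n * s) \<le> real K" and \<epsilon>: "0 < \<epsilon>"
    and mean: "\<bar>expectation (trunc_sum K (real n * s) n) / (real n * ln (real n)) - \<theta> / c\<bar> < \<epsilon> / 2"
    and level: "real K / (real n * ln (real n)) < \<epsilon> / 4"
  shows "measure M {\<omega>\<in>space M. \<bar>real (S H E n \<omega>) / (real n * ln (real n)) - \<theta> / c\<bar> > \<epsilon>} \<le>
    1 / (c * s) + 2 / (\<theta> * s) +
    16 / \<epsilon>\<^sup>2 * (real (n - 1) * (real K * (\<theta> * trunc_mean c (real n * s))) / (real n * ln (real n))\<^sup>2)"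
proof -
  define L where "L = real n * ln (real n)"
  define V where "V = real (n - 1) * (real K * (\<theta> * trunc_mean c (real n * s)))"
  have L: "0 < L" and t: "0 < real n * s"
    using n s by (auto simp: L_def)
  have dev: "\<bar>x / L - \<theta> / c\<bar> = \<bar>x - \<theta> / c * L\<bar> / L" for x
  proof -
    have "x / L - \<theta> / c = (x - \<theta> / c * L) / L"
      using L by (simp add: diff_divide_distrib)
    then show ?thesis
      using L by (simp add: abs_divide)
  qed
  have "\<bar>expectation (trunc_sum K (real n * s) n) - \<theta> / c * L\<bar> < \<epsilon> * L / 2" "real K < \<epsilon> * L / 4"
    using mean level L by (simp_all add: L_def[symmetric] dev pos_divide_less_eq)
  then have r: "\<bar>expectation (trunc_sum K (real n * s) n) - \<theta> / c * L\<bar> + \<epsilon> * L / 4 + real K \<le> \<epsilon> * L"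
    by linarith
  have "{\<omega>\<in>space M. \<bar>real (S H E n \<omega>) / L - \<theta> / c\<bar> > \<epsilon>} =
      {\<omega>\<in>space M. \<epsilon> * L < \<bar>real (S H E n \<omega>) - \<theta> / c * L\<bar>}"
    using L by (simp add: dev pos_less_divide_eq)
  then have "measure M {\<omega>\<in>space M. \<bar>real (S H E n \<omega>) / L - \<theta> / c\<bar> > \<epsilon>} \<le>
      real n / (c * (real n * s)) + 2 * real n / (\<theta> * (real n * s)) + V / (\<epsilon> * L / 4)\<^sup>2"
    using prob_S_deviation_le[OF _ t K _ r] n \<epsilon> L by (simp add: V_def)
  also have "\<dots> = 1 / (c * s) + 2 / (\<theta> * s) + 16 / \<epsilon>\<^sup>2 * (V / L\<^sup>2)"
    using n \<epsilon> L by (simp add: power2_eq_square ac_simps)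
  finally show ?thesis
    by (simp add: L_def V_def)
qed

lemma S_concentration:
  assumes \<epsilon>: "0 < \<epsilon>" and \<eta>: "0 < \<eta>"
  shows "eventually (\<lambda>n. measure M {\<omega>\<in>space M.
    \<bar>real (S H E n \<omega>) / (real n * ln (real n)) - \<theta> / c\<bar> > \<epsilon>} < \<eta>) sequentially"
proof -
  define A where "A = 1 / c + 2 / \<theta>"
  define s where "s = 4 * A / \<eta>"
  have A: "0 < A"
    using c_pos \<theta>_pos by (simp add: A_def add_pos_pos)
  then have s: "0 < s"
    using \<eta> by (simp add: s_def)
  have "1 / (c * s) + 2 / (\<theta> * s) = A / s"
    by (simp add: A_def add_divide_distrib)
  then have trunc: "1 / (c * s) + 2 / (\<theta> * s) = \<eta> / 4"
    using A \<eta> by (simp add: s_def)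
  define K where "K n = trunc_level (real n * s)" for n
  have "eventually (\<lambda>n. \<bar>expectation (trunc_sum (K n) (real n * s) n) / (real n * ln (real n)) - \<theta> / c\<bar>
      < \<epsilon> / 2) sequentially"
    using tendstoD[OF expectation_trunc_sum_asymp[OF s], of "\<epsilon> / 2"] \<epsilon> by (simp add: K_def dist_real_def)
  moreover have "eventually (\<lambda>n. real (K n) / (real n * ln (real n)) < \<epsilon> / 4) sequentially"
    using order_tendstoD(2)[OF trunc_level_asymp[OF s], of "\<epsilon> / 4"] \<epsilon> by (simp add: K_def)
  moreover have "eventually (\<lambda>n. real (n - 1) * (real (K n) * (\<theta> * trunc_mean c (real n * s))) /
      (real n * ln (real n))\<^sup>2 < \<epsilon>\<^sup>2 * \<eta> / 32) sequentially"
    using order_tendstoD(2)[OF variance_trunc_sum_bound_asymp[OF s], of "\<epsilon>\<^sup>2 * \<eta> / 32"] \<epsilon> \<eta>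
    by (simp add: K_def)
  ultimately show ?thesis
    using eventually_ge_at_top[of 2]
  proof eventually_elim
    case (elim n)
    have "16 / \<epsilon>\<^sup>2 * (real (n - 1) * (real (K n) * (\<theta> * trunc_mean c (real n * s))) / (real n * ln (real n))\<^sup>2)
        < 16 / \<epsilon>\<^sup>2 * (\<epsilon>\<^sup>2 * \<eta> / 32)"
      using elim \<epsilon> by (intro mult_strict_left_mono) auto
    then show ?case
      using prob_S_ratio_deviation_le[OF _ s _ \<epsilon>, of n "K n"] elim trunc_level_ge \<epsilon> \<eta> trunc
      unfolding K_def by simp
  qed
qed

end

theorem theorem2p4:
  fixes M :: "'a measure" and c \<theta> :: real
    and H :: "nat \<Rightarrow> 'a \<Rightarrow> real" and E :: "nat \<Rightarrow> nat \<Rightarrow> 'a \<Rightarrow> real"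
  assumes "prob_space M"
    and "c > 0" and "\<theta> > 0"
    and indep: "prob_space.indep_vars M (\<lambda>_. borel) (driving H E) driving_index"
    and H_pos: "\<And>i. 1 \<le> i \<Longrightarrow> AE \<omega> in M. H i \<omega> > 0"
    and H_dist: "\<And>i x. 1 \<le> i \<Longrightarrow> x \<ge> 0 \<Longrightarrow>
                    measure M {\<omega> \<in> space M. H i \<omega> > x} = 1 / (1 + c * x)"
    and E_dist: "\<And>i j. 1 \<le> j \<Longrightarrow> distributed M lborel (E i j) (exponential_density \<theta>)"
  shows "\<forall>\<epsilon>>0. ((\<lambda>n. measure M {\<omega> \<in> space M.
             \<bar>real (S H E n \<omega>) / (real n * ln (real n)) - \<theta> / c\<bar> > \<epsilon>}) \<longlongrightarrow> 0) sequentially"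
proof -
  interpret coalescent_point_process M c \<theta> H E
    unfolding coalescent_point_process_def coalescent_point_process_axioms_def
    using assms(1-4,6,7) by blast
  show ?thesis
  proof (intro allI impI order_tendstoI)
    fix \<epsilon> \<eta> :: real
    assume "0 < \<epsilon>" "0 < \<eta>"
    then show "eventually (\<lambda>n. measure M {\<omega> \<in> space M.
        \<bar>real (S H E n \<omega>) / (real n * ln (real n)) - \<theta> / c\<bar> > \<epsilon>} < \<eta>) sequentially"
      by (rule S_concentration)
  qed (simp add: less_le_trans[OF _ measure_nonneg])
qed

end
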